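(* Let $r\ge 1$ and $m\ge r$ be integers, and put $d_k(m,r)=\det\left(\binom{k+i+j}{m}\right)_{i,j=0}^{r-1}$ for $k\ge 0$. Then, as formal power series in $x$, $$(1-x)^{r(m-r+1)+1}\sum_{k\ge 0} d_k(m,r)\,x^k=(-1)^{\binom r2}\,x^{m-r+1}A_{m,r}(x),$$ where $A_{m,r}(x)=\sum_{j} N(r,m-r+1,j)\,x^j$ is a polynomial in $x$ of degree at most $(r-1)(m-r)$.
   Context: For an integer $x$ and integer $r>0$ the rising factorial is $x^{(r)}=x(x+1)\cdots(x+r-1)$, with $x^{(0)}=1$. For a positive integer $r$ and integers $n,k$ the $r$-Hoggatt binomial is defined by $\left\langle \begin{smallmatrix} n\\ k\end{smallmatrix}\right\rangle_r=\prod_{j=1}^{k}\frac{(n-k+j)^{(r)}}{(j)^{(r)}}$ for $0\le k\le n$ (empty product $=1$), and $0$ otherwise. For integers $r\ge1$, $s\ge 1$, the $r$-dimensional Narayana numbers $N(r,s,j)$ ($j\ge 0$) are the coefficients in $$(1-x)^{rs+1}\sum_{k\ge0}\left\langle \begin{matrix} k+s\\ s\end{matrix}\right\rangle_r x^k=\sum_{j\ge 0}N(r,s,j)\,x^j ,$$ and the left-hand side is a polynomial in $x$ of degree at most $(r-1)(s-1)$. *)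

theory Defs
  imports "Jordan_Normal_Form.Determinant" "HOL-Computational_Algebra.Formal_Power_Series"
begin

definition hoggatt :: "nat \<Rightarrow> int \<Rightarrow> int \<Rightarrow> rat" where
  "hoggatt r n k = (if 0 \<le> k \<and> k \<le> n
      then (\<Prod>j\<in>{1..k}. pochhammer (of_int (n - k + j)) r / pochhammer (of_int j) r)
      else 0)"

definition narayana_series :: "nat \<Rightarrow> nat \<Rightarrow> rat fps" where
  "narayana_series r s =
     (1 - fps_X) ^ (r * s + 1) * Abs_fps (\<lambda>k. hoggatt r (int k + int s) (int s))"

definition narayana :: "nat \<Rightarrow> nat \<Rightarrow> nat \<Rightarrow> rat" where
  "narayana r s j = fps_nth (narayana_series r s) j"

definition dk :: "nat \<Rightarrow> nat \<Rightarrow> nat \<Rightarrow> rat" where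
  "dk k m r = det (mat r r (\<lambda>(i, j). of_nat ((k + i + j) choose m)))"

end

theory Submission
  imports Defs
begin

text \<open>
  Vandermonde's convolution factors the Hankel matrix \<open>(C(k+i+j, m))\<close> as the Pascal matrix
  \<open>(C(i, a))\<close> times \<open>B = (C(k+j, m-a))\<close>. With \<open>s = m-r+1\<close>, row \<open>a\<close> of \<open>B\<close> carries the factor
  \<open>1 / C(m-a, s)\<close> and column \<open>j\<close> the factor \<open>C(k+j, s)\<close>; what is left, \<open>(C(k-s+j, r-1-a))\<close>,
  is an anti-triangular matrix with unit antidiagonal times the transposed Pascal matrix. Hence
  \<open>d_k(m,r) = (-1)^(r choose 2) <k, s>_r\<close>, and the series of the \<open>d_k\<close> is \<open>\<plusminus>x^s\<close> times that
  of \<open><k+s, s>_r\<close>.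

  The degree bound: \<open>k \<mapsto> <k+s, s>_r\<close> is a polynomial of degree at most \<open>rs\<close> vanishing at
  \<open>-1, \<dots>, -(r+s-1)\<close>. Multiplying its series of values by \<open>1 - x\<close> takes a backward difference,
  which lowers the degree and keeps all roots but one, so \<open>(1-x)^(rs+1)\<close> leaves no coefficient
  beyond \<open>rs - (r+s-1) = (r-1)(s-1)\<close>.
\<close>

section \<open>Hankel determinants of binomial coefficients\<close>

lemma det_scale_rows:
  fixes A :: "'a::comm_ring_1 mat"
  assumes A: "A \<in> carrier_mat n n"
  shows "det (mat n n (\<lambda>(i,j). c i * A $$ (i,j))) = prod c {0..<n} * det A"
proof -
  have "det (mat n n (\<lambda>(i,j). c i * A $$ (i,j))) =
     (\<Sum>p \<in> {p. p permutes {0..<n}}. signof p * (\<Prod>i = 0..<n. c i * A $$ (i, p i)))"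
    by (subst det_def'[of _ n]) (auto intro!: sum.cong prod.cong dest: permutes_in_image)
  also have "\<dots> = (\<Sum>p \<in> {p. p permutes {0..<n}}. prod c {0..<n} * (signof p * (\<Prod>i = 0..<n. A $$ (i, p i))))"
    by (auto intro!: sum.cong simp: prod.distrib)
  also have "\<dots> = prod c {0..<n} * det A"
    by (simp add: det_def'[OF A] sum_distrib_left)
  finally show ?thesis .
qed

lemma det_scale_cols:
  fixes A :: "'a::comm_ring_1 mat"
  assumes A: "A \<in> carrier_mat n n"
  shows "det (mat n n (\<lambda>(i,j). A $$ (i,j) * c j)) = prod c {0..<n} * det A"
proof -
  have "det (mat n n (\<lambda>(i,j). A $$ (i,j) * c j)) = det (transpose_mat (mat n n (\<lambda>(i,j). A $$ (i,j) * c j)))"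
    by (rule det_transpose[symmetric]) auto
  also have "transpose_mat (mat n n (\<lambda>(i,j). A $$ (i,j) * c j)) = mat n n (\<lambda>(i,j). c i * transpose_mat A $$ (i,j))"
    using A by (auto intro!: eq_matI)
  also have "det \<dots> = prod c {0..<n} * det (transpose_mat A)"
    by (rule det_scale_rows) (use A in auto)
  finally show ?thesis
    by (simp add: det_transpose[OF A])
qed

definition pascal_mat :: "nat \<Rightarrow> 'a::comm_ring_1 mat" where
  "pascal_mat r = mat r r (\<lambda>(i,a). of_nat (i choose a))"

lemma pascal_mat_carrier [simp]: "pascal_mat r \<in> carrier_mat r r"
  by (simp add: pascal_mat_def)

lemma det_pascal_mat [simp]: "det (pascal_mat r) = 1"
proof -
  have "det (pascal_mat r) = prod_list (diag_mat (pascal_mat r))"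
    by (rule det_lower_triangular[of r]) (auto simp: pascal_mat_def binomial_eq_0)
  then show ?thesis by (simp add: prod_list_diag_prod pascal_mat_def)
qed

lemma vandermonde_truncated:
  assumes "i < r" "r \<le> m"
  shows "(\<Sum>a<r. (i choose a) * (n choose (m - a))) = (i + n) choose m"
proof -
  have "(\<Sum>a<r. (i choose a) * (n choose (m - a))) = (\<Sum>a\<le>m. (i choose a) * (n choose (m - a)))"
    by (rule sum.mono_neutral_left) (use assms in auto)
  then show ?thesis by (simp add: vandermonde)
qed

lemma hankel_binomial_eq_pascal_mult:
  assumes "r \<le> m"
  shows "mat r r (\<lambda>(i,j). of_nat ((k + i + j) choose m))
           = pascal_mat r * mat r r (\<lambda>(a,j). of_nat ((k + j) choose (m - a)) :: 'a::comm_ring_1)"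
    (is "_ = _ * ?B")
proof (rule eq_matI)
  fix i j assume "i < dim_row (pascal_mat r * ?B)" "j < dim_col (pascal_mat r * ?B)"
  then have i: "i < r" and j: "j < r" by (auto simp: pascal_mat_def)
  have "(pascal_mat r * ?B) $$ (i,j) = (\<Sum>a\<in>{0..<r}. of_nat (i choose a) * of_nat ((k + j) choose (m - a)))"
    using i j by (simp add: pascal_mat_def scalar_prod_def)
  also have "\<dots> = of_nat (\<Sum>a<r. (i choose a) * ((k + j) choose (m - a)))"
    by (simp add: atLeast0LessThan)
  also have "\<dots> = of_nat ((k + i + j) choose m)"
    using vandermonde_truncated[OF i assms, of "k + j"] by (simp add: ac_simps)
  finally show "mat r r (\<lambda>(i,j). of_nat ((k + i + j) choose m)) $$ (i,j) = (pascal_mat r * ?B) $$ (i,j)"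
    using i j by simp
qed (auto simp: pascal_mat_def)

definition binomial_antitriangular_mat :: "nat \<Rightarrow> nat \<Rightarrow> 'a::comm_ring_1 mat" where
  "binomial_antitriangular_mat t r =
     mat r r (\<lambda>(a,l). if a + l < r then of_nat (t choose (r - 1 - a - l)) else 0)"

lemma det_binomial_antitriangular_mat:
  "det (binomial_antitriangular_mat t r :: 'a::comm_ring_1 mat) = (-1) ^ (r choose 2)"
proof (induction r)
  case 0
  then show ?case by (simp add: binomial_antitriangular_mat_def binomial_eq_0)
next
  case (Suc r)
  let ?W = "binomial_antitriangular_mat t (Suc r) :: 'a mat"
  have "det ?W = (\<Sum>j<Suc r. ?W $$ (r,j) * cofactor ?W r j)"
    by (rule laplace_expansion_row) (auto simp: binomial_antitriangular_mat_def)
  also have "\<dots> = (\<Sum>j<Suc r. if j = 0 then cofactor ?W r j else 0)"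
    by (rule sum.cong) (auto simp: binomial_antitriangular_mat_def)
  also have "\<dots> = cofactor ?W r 0"
    by simp
  also have "mat_delete ?W r 0 = binomial_antitriangular_mat t r"
    by (rule eq_matI) (auto simp: mat_delete_def binomial_antitriangular_mat_def)
  then have "cofactor ?W r 0 = (-1) ^ r * det (binomial_antitriangular_mat t r :: 'a mat)"
    by (simp add: cofactor_def)
  moreover have "Suc r choose 2 = (r choose 2) + r"
    using binomial_Suc_Suc[of r 1] by (simp add: numeral_2_eq_2)
  ultimately show ?case
    using Suc.IH by (simp add: power_add)
qed

lemma binomial_shift_mat_eq_antitriangular_mult:
  "mat r r (\<lambda>(a,j). of_nat ((t + j) choose (r - 1 - a)))
     = binomial_antitriangular_mat t r * transpose_mat (pascal_mat r :: 'a::comm_ring_1 mat)"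
    (is "_ = ?W * ?L")
proof (rule eq_matI)
  fix a j assume "a < dim_row (?W * ?L)" "j < dim_col (?W * ?L)"
  then have a: "a < r" and j: "j < r" by (auto simp: binomial_antitriangular_mat_def pascal_mat_def)
  have "(?W * ?L) $$ (a,j) =
       (\<Sum>l\<in>{0..<r}. (if a + l < r then of_nat (t choose (r-1-a-l)) else 0) * of_nat (j choose l))"
    using a j by (simp add: pascal_mat_def binomial_antitriangular_mat_def scalar_prod_def)
  also have "\<dots> = (\<Sum>l\<le>r-1-a. of_nat (j choose l) * of_nat (t choose (r-1-a-l)))"
    by (rule sum.mono_neutral_cong_right) (use a in auto)
  also have "\<dots> = of_nat ((j + t) choose (r-1-a))"
    by (simp flip: vandermonde)
  finally show "mat r r (\<lambda>(a,j). of_nat ((t + j) choose (r - 1 - a))) $$ (a,j) = (?W * ?L) $$ (a,j)"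
    using a j by (simp add: ac_simps)
qed (auto simp: binomial_antitriangular_mat_def pascal_mat_def)

lemma det_binomial_shift_mat:
  "det (mat r r (\<lambda>(a,j). of_nat ((t + j) choose (r - 1 - a)) :: 'a::comm_ring_1)) = (-1) ^ (r choose 2)"
proof -
  have W: "binomial_antitriangular_mat t r \<in> carrier_mat r r"
    by (simp add: binomial_antitriangular_mat_def)
  have L: "transpose_mat (pascal_mat r :: 'a mat) \<in> carrier_mat r r"
    by simp
  show ?thesis
    unfolding binomial_shift_mat_eq_antitriangular_mult det_mult[OF W L]
    by (simp add: det_binomial_antitriangular_mat det_transpose[of _ r])
qed

lemma choose_add_mult_choose:
  "(n choose (s + q)) * ((s + q) choose s) = (n choose s) * ((n - s) choose q)"
proof (cases "s + q \<le> n")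
  case True
  then show ?thesis using choose_mult[of s "s + q" n] by simp
next
  case False
  then show ?thesis by (cases "s \<le> n") (simp_all add: binomial_eq_0)
qed

lemma det_binomial_mat:
  assumes "r \<le> m"
  defines "s \<equiv> m - r + 1"
  shows "det (mat r r (\<lambda>(a,j). of_nat ((k + j) choose (m - a)) :: 'a::field_char_0))
           = (-1) ^ (r choose 2) * (\<Prod>j<r. of_nat ((k + j) choose s)) / (\<Prod>a<r. of_nat ((s + a) choose s))"
proof -
  define Q where "Q = mat r r (\<lambda>(a,j). of_nat ((k + j - s) choose (r - 1 - a)) :: 'a)"
  define c where "c j = (of_nat ((k + j) choose s) :: 'a)" for j
  define d where "d a = 1 / (of_nat ((m - a) choose s) :: 'a)" for a
  have split: "m - a = s + (r - 1 - a)" if "a < r" for a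
    using that assms by auto
  have "mat r r (\<lambda>(a,j). of_nat ((k + j) choose (m - a)))
          = mat r r (\<lambda>(a,j). d a * mat r r (\<lambda>(a,j). Q $$ (a,j) * c j) $$ (a,j))"
  proof (rule eq_matI)
    fix a j assume "a < dim_row (mat r r (\<lambda>(a,j). d a * mat r r (\<lambda>(a,j). Q $$ (a,j) * c j) $$ (a,j)))"
      "j < dim_col (mat r r (\<lambda>(a,j). d a * mat r r (\<lambda>(a,j). Q $$ (a,j) * c j) $$ (a,j)))"
    then have a: "a < r" and j: "j < r" by auto
    have "((k + j) choose (m - a)) * ((m - a) choose s) = ((k + j) choose s) * ((k + j - s) choose (r - 1 - a))"
      using choose_add_mult_choose[of "k + j" s "r - 1 - a"] split[OF a] by simp
    then have "(of_nat ((k + j) choose (m - a)) :: 'a) * of_nat ((m - a) choose s)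
        = of_nat ((k + j) choose s) * of_nat ((k + j - s) choose (r - 1 - a))"
      by (metis of_nat_mult)
    moreover have "((m - a) choose s) \<noteq> 0"
      using split[OF a] by simp
    ultimately show "mat r r (\<lambda>(a,j). of_nat ((k + j) choose (m - a))) $$ (a,j)
        = mat r r (\<lambda>(a,j). d a * mat r r (\<lambda>(a,j). Q $$ (a,j) * c j) $$ (a,j)) $$ (a,j)"
      using a j by (simp add: Q_def c_def d_def eq_divide_eq mult_ac)
  qed auto
  moreover have "Q \<in> carrier_mat r r"
    by (simp add: Q_def)
  ultimately have "det (mat r r (\<lambda>(a,j). of_nat ((k + j) choose (m - a)) :: 'a))
      = prod d {0..<r} * (prod c {0..<r} * det Q)"
    by (simp add: det_scale_rows[of _ r] det_scale_cols)
  also have "prod d {0..<r} = 1 / (\<Prod>a<r. of_nat ((s + a) choose s))"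
  proof -
    have "(\<Prod>a<r. (of_nat ((m - a) choose s) :: 'a)) = (\<Prod>a<r. of_nat ((s + (r - Suc a)) choose s))"
      by (intro prod.cong) (simp_all add: split)
    also have "\<dots> = (\<Prod>a<r. of_nat ((s + a) choose s))"
      by (rule prod.nat_diff_reindex)
    finally show ?thesis
      by (simp add: d_def prod_dividef atLeast0LessThan)
  qed
  also have "prod c {0..<r} * det Q = (-1) ^ (r choose 2) * (\<Prod>j<r. of_nat ((k + j) choose s))"
  proof (cases "s \<le> k")
    case True
    then have "Q = mat r r (\<lambda>(a,j). of_nat ((k - s + j) choose (r - 1 - a)))"
      by (auto simp: Q_def intro!: eq_matI)
    then have "det Q = (-1) ^ (r choose 2)"
      using det_binomial_shift_mat[of r "k - s"] by (simp only:)
    then show ?thesis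
      by (simp add: c_def atLeast0LessThan)
  next
    case False
    then show ?thesis
      by (cases r) (auto simp: c_def Q_def atLeast0LessThan binomial_eq_0 intro!: prod_zero bexI[of _ 0])
  qed
  finally show ?thesis
    by simp
qed

lemma dk_eq_det_binomial_mat:
  assumes "r \<le> m"
  shows "dk k m r = det (mat r r (\<lambda>(a,j). of_nat ((k + j) choose (m - a))))"
proof -
  have "dk k m r = det (pascal_mat r * mat r r (\<lambda>(a,j). of_nat ((k + j) choose (m - a))))"
    unfolding dk_def hankel_binomial_eq_pascal_mult[OF assms] ..
  then show ?thesis
    by (simp add: det_mult[of _ r])
qed

section \<open>Hoggatt binomials as binomial ratios\<close>

lemma of_nat_choose_eq_pochhammer:
  "(of_nat ((x + s) choose s) :: 'a::field_char_0) = pochhammer (of_nat x + 1) s / fact s"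
  by (simp add: binomial_gbinomial gbinomial_pochhammer')

lemma prod_pochhammer_swap:
  "(\<Prod>j<r. pochhammer (y + of_nat j + 1) s) = (\<Prod>j\<in>{1..s}. pochhammer (y + of_nat j) r :: 'a::comm_semiring_1)"
proof -
  have "(\<Prod>j<r. pochhammer (y + of_nat j + 1) s) = (\<Prod>j<r. \<Prod>i<s. y + of_nat j + 1 + of_nat i)"
    by (simp add: pochhammer_prod atLeast0LessThan)
  also have "\<dots> = (\<Prod>i<s. \<Prod>j<r. y + of_nat j + 1 + of_nat i)"
    by (rule prod.swap)
  also have "\<dots> = (\<Prod>i<s. pochhammer (y + of_nat (Suc i)) r)"
    by (simp add: pochhammer_prod atLeast0LessThan algebra_simps)
  also have "\<dots> = (\<Prod>j\<in>{1..s}. pochhammer (y + of_nat j) r)"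
    by (simp add: prod.atLeast1_atMost_eq del: of_nat_Suc)
  finally show ?thesis .
qed

lemma hoggatt_of_nat:
  assumes "s \<le> k"
  shows "hoggatt r (int k) (int s)
           = (\<Prod>j\<in>{1..s}. pochhammer (of_nat (k - s) + of_nat j) r) / (\<Prod>j\<in>{1..s}. pochhammer (of_nat j) r)"
proof -
  have "hoggatt r (int k) (int s)
      = (\<Prod>j\<in>int ` {1..s}. pochhammer (of_int (int k - int s + j)) r / pochhammer (of_int j) r)"
    using assms by (simp add: hoggatt_def image_int_atLeastAtMost)
  also have "\<dots> = (\<Prod>j\<in>{1..s}. pochhammer (of_nat (k - s) + of_nat j) r / pochhammer (of_nat j) r)"
    using assms by (subst prod.reindex) (auto simp: of_nat_diff intro!: prod.cong)
  finally show ?thesis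
    by (simp add: prod_dividef)
qed

lemma hoggatt_eq_binomial_ratio:
  assumes "1 \<le> r"
  shows "hoggatt r (int k) (int s) = (\<Prod>j<r. of_nat ((k + j) choose s)) / (\<Prod>a<r. of_nat ((s + a) choose s))"
proof (cases "s \<le> k")
  case True
  have "(\<Prod>j<r. of_nat ((k + j) choose s) :: rat) = (\<Prod>j<r. of_nat ((k - s + j + s) choose s))"
    using True by (simp add: algebra_simps)
  also have "\<dots> = (\<Prod>j\<in>{1..s}. pochhammer (of_nat (k - s) + of_nat j) r) / fact s ^ r"
    by (simp add: of_nat_choose_eq_pochhammer prod_dividef prod_pochhammer_swap)
  finally have num: "(\<Prod>j<r. of_nat ((k + j) choose s) :: rat)
      = (\<Prod>j\<in>{1..s}. pochhammer (of_nat (k - s) + of_nat j) r) / fact s ^ r" .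
  have "(\<Prod>a<r. of_nat ((s + a) choose s) :: rat) = (\<Prod>j<r. pochhammer (of_nat j + 1) s / fact s)"
    by (intro prod.cong) (auto simp: of_nat_choose_eq_pochhammer add.commute)
  also have "\<dots> = (\<Prod>j\<in>{1..s}. pochhammer (of_nat j) r) / fact s ^ r"
    using prod_pochhammer_swap[where y = 0] by (simp add: prod_dividef)
  finally have den: "(\<Prod>a<r. of_nat ((s + a) choose s) :: rat)
      = (\<Prod>j\<in>{1..s}. pochhammer (of_nat j) r) / fact s ^ r" .
  show ?thesis
    unfolding num den hoggatt_of_nat[OF True] by simp
next
  case False
  then show ?thesis
    using assms by (auto simp: hoggatt_def binomial_eq_0 intro!: prod_zero bexI[of _ 0])
qed

lemma hoggatt_series_shift:
  "Abs_fps (\<lambda>k. hoggatt r (int k) (int s)) = fps_X ^ s * Abs_fps (\<lambda>k. hoggatt r (int k + int s) (int s))"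
proof (rule fps_ext)
  fix k
  show "fps_nth (Abs_fps (\<lambda>k. hoggatt r (int k) (int s))) k
      = fps_nth (fps_X ^ s * Abs_fps (\<lambda>k. hoggatt r (int k + int s) (int s))) k"
    by (cases "k < s") (simp_all add: fps_X_power_mult_nth hoggatt_def of_nat_diff)
qed

theorem dk_eq_hoggatt:
  assumes "1 \<le> r" "r \<le> m"
  shows "dk k m r = (-1) ^ (r choose 2) * hoggatt r (int k) (int (m - r + 1))"
  unfolding dk_eq_det_binomial_mat[OF assms(2)] det_binomial_mat[OF assms(2)]
    hoggatt_eq_binomial_ratio[OF assms(1)]
  by simp

section \<open>Series of values of a polynomial\<close>

definition poly_value_fps :: "'a::comm_semiring_1 poly \<Rightarrow> 'a fps" where
  "poly_value_fps P = Abs_fps (\<lambda>k. poly P (of_nat k))"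

lemma poly_value_fps_0 [simp]: "poly_value_fps 0 = 0"
  by (simp add: poly_value_fps_def fps_zero_def)

definition backward_diff :: "'a::comm_ring_1 poly \<Rightarrow> 'a poly" where
  "backward_diff P = P - P \<circ>\<^sub>p [:-1, 1:]"

lemma poly_backward_diff [simp]: "poly (backward_diff P) x = poly P x - poly P (x - 1)"
  by (simp add: backward_diff_def poly_pcompose)

lemma backward_diff_const [simp]: "backward_diff [:c:] = 0"
  by (simp add: backward_diff_def)

lemma degree_backward_diff_less:
  fixes P :: "'a::idom poly"
  assumes "degree P > 0"
  shows "degree (backward_diff P) < degree P"
proof -
  have deg: "degree (P \<circ>\<^sub>p [:-1, 1:]) = degree P"
    by (simp add: degree_pcompose)
  have "coeff (backward_diff P) (degree P) = 0"
    using lead_coeff_comp[of "[:-1, 1:]" P] deg by (simp add: backward_diff_def)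
  moreover have "degree (backward_diff P) \<le> degree P"
    using degree_diff_le[of P "degree P" "P \<circ>\<^sub>p [:-1, 1:]"] deg by (simp add: backward_diff_def)
  ultimately show ?thesis
    using assms by (metis degree_0 le_neq_implies_less leading_coeff_0_iff)
qed

lemma one_minus_X_mult_poly_value_fps:
  "(1 - fps_X) * poly_value_fps P = poly_value_fps (backward_diff P) + fps_const (poly P (-1))"
proof (rule fps_ext)
  fix n
  have "fps_nth ((1 - fps_X) * poly_value_fps P) n
      = poly P (of_nat n) - (if n = 0 then 0 else poly P (of_nat (n - 1)))"
    by (simp add: algebra_simps poly_value_fps_def)
  then show "fps_nth ((1 - fps_X) * poly_value_fps P) n
      = fps_nth (poly_value_fps (backward_diff P) + fps_const (poly P (-1))) n"
    by (cases n) (auto simp: poly_value_fps_def)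
qed

lemma fps_nth_one_minus_X_power:
  assumes "N < n"
  shows "fps_nth ((1 - fps_X) ^ N) n = (0::'a::comm_ring_1)"
  using assms
proof (induction N arbitrary: n)
  case (Suc N)
  have "fps_nth ((1 - fps_X) ^ Suc N) n = fps_nth ((1 - fps_X) ^ N) n - fps_nth ((1 - fps_X) ^ N :: 'a fps) (n - 1)"
    using Suc.prems by (simp add: algebra_simps)
  then show ?case
    using Suc by simp
qed simp

lemma fps_nth_one_minus_X_power_mult_poly_value_fps:
  fixes P :: "'a::idom poly"
  assumes "degree P < N"
    and "\<And>i. 1 \<le> i \<Longrightarrow> i \<le> t \<Longrightarrow> poly P (- of_nat i) = 0"
    and "N - t \<le> n"
  shows "fps_nth ((1 - fps_X) ^ N * poly_value_fps P) n = 0"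
  using assms
proof (induction N arbitrary: P t n)
  case (Suc N)
  have split: "(1 - fps_X) ^ Suc N * poly_value_fps P
      = (1 - fps_X) ^ N * poly_value_fps (backward_diff P) + (1 - fps_X) ^ N * fps_const (poly P (-1))"
    by (simp only: power_Suc2 mult.assoc one_minus_X_mult_poly_value_fps distrib_left)
  have const: "fps_nth ((1 - fps_X) ^ N * fps_const (poly P (-1))) n = 0"
  proof (cases "t = 0")
    case True
    then show ?thesis
      using Suc.prems by (simp add: fps_nth_one_minus_X_power)
  next
    case False
    then show ?thesis
      using Suc.prems(2)[of 1] by simp
  qed
  have diff: "fps_nth ((1 - fps_X) ^ N * poly_value_fps (backward_diff P)) n = 0"
  proof (cases "degree P = 0")
    case True
    then show ?thesis
      by (auto elim!: degree_eq_zeroE)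
  next
    case False
    \<comment> \<open>The difference has degree one less and keeps the roots \<open>-1, \<dots>, -(t-1)\<close>.\<close>
    have "poly (backward_diff P) (- of_nat i) = 0" if "1 \<le> i" "i \<le> t - 1" for i
    proof -
      have "- of_nat i - 1 = (- of_nat (Suc i) :: 'a)"
        by simp
      then show ?thesis
        using that Suc.prems(2)[of i] Suc.prems(2)[of "Suc i"] by (simp del: of_nat_Suc)
    qed
    moreover have "degree (backward_diff P) < N"
      using degree_backward_diff_less[of P] False Suc.prems(1) by simp
    ultimately show ?thesis
      using Suc.IH[of "backward_diff P" "t - 1" n] Suc.prems(3) by simp
  qed
  show ?case
    unfolding split using const diff by simp
qed simp

section \<open>Narayana numbers\<close>

definition hoggatt_poly :: "nat \<Rightarrow> nat \<Rightarrow> rat poly" where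
  "hoggatt_poly r s = smult (1 / (\<Prod>j\<in>{1..s}. pochhammer (of_nat j) r)) (\<Prod>j\<in>{1..s}. \<Prod>i<r. [:of_nat (j + i), 1:])"

lemma poly_hoggatt_poly:
  "poly (hoggatt_poly r s) x = (\<Prod>j\<in>{1..s}. pochhammer (x + of_nat j) r) / (\<Prod>j\<in>{1..s}. pochhammer (of_nat j) r)"
proof -
  have "poly (\<Prod>j\<in>{1..s}. \<Prod>i<r. [:of_nat (j + i), 1:]) x = (\<Prod>j\<in>{1..s}. pochhammer (x + of_nat j) r)"
    by (simp add: poly_prod pochhammer_prod atLeast0LessThan algebra_simps)
  then show ?thesis
    by (simp add: hoggatt_poly_def)
qed

lemma poly_hoggatt_poly_of_nat: "poly (hoggatt_poly r s) (of_nat k) = hoggatt r (int k + int s) (int s)"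
  using hoggatt_of_nat[of s "k + s" r] by (simp add: poly_hoggatt_poly)

lemma degree_hoggatt_poly: "degree (hoggatt_poly r s) \<le> r * s"
proof -
  have factor: "degree (\<Prod>i<r. [:of_nat (j + i) :: rat, 1:]) \<le> r" for j
    using degree_prod_sum_le[of "{..<r}" "\<lambda>i. [:of_nat (j + i) :: rat, 1:]"] by (simp add: o_def)
  have "degree (\<Prod>j\<in>{1..s}. \<Prod>i<r. [:of_nat (j + i) :: rat, 1:])
      \<le> (\<Sum>j\<in>{1..s}. degree (\<Prod>i<r. [:of_nat (j + i) :: rat, 1:]))"
    using degree_prod_sum_le[of "{1..s}" "\<lambda>j. \<Prod>i<r. [:of_nat (j + i) :: rat, 1:]"] by (simp add: o_def)
  also have "\<dots> \<le> (\<Sum>j\<in>{1..s}. r)"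
    by (rule sum_mono) (rule factor)
  also have "\<dots> = r * s"
    by simp
  finally show ?thesis
    unfolding hoggatt_poly_def by (rule order.trans[OF degree_smult_le])
qed

lemma poly_hoggatt_poly_neg_eq_0:
  assumes "1 \<le> r" "1 \<le> s" "1 \<le> n" "n < r + s"
  shows "poly (hoggatt_poly r s) (- of_nat n) = 0"
proof -
  \<comment> \<open>In the numerator, the factor \<open>(-n + j)^(r)\<close> with \<open>j = min n s\<close> contains \<open>0\<close>.\<close>
  define j where "j = min n s"
  have j: "j \<in> {1..s}" "j \<le> n" "n - j < r"
    using assms by (auto simp: j_def)
  have "pochhammer (- of_nat (n - j)) r = (0::rat)"
    using j(3) by (simp add: pochhammer_of_nat_eq_0_iff)
  moreover have "- of_nat n + of_nat j = (- of_nat (n - j) :: rat)"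
    using j(2) by (simp add: of_nat_diff)
  ultimately have "pochhammer (- of_nat n + of_nat j) r = (0::rat)"
    by (simp only:)
  then have "(\<Prod>j\<in>{1..s}. pochhammer (- of_nat n + of_nat j) r :: rat) = 0"
    using j(1) by (intro prod_zero) blast+
  then show ?thesis
    unfolding poly_hoggatt_poly by (simp only: div_0)
qed

lemma narayana_series_eq:
  "narayana_series r s = (1 - fps_X) ^ (r * s + 1) * poly_value_fps (hoggatt_poly r s)"
  by (simp add: narayana_series_def poly_value_fps_def poly_hoggatt_poly_of_nat)

theorem narayana_eq_0:
  assumes "1 \<le> r" "1 \<le> s" "(r - 1) * (s - 1) < j"
  shows "narayana r s j = 0"
proof -
  obtain r' s' where "r = Suc r'" "s = Suc s'"
    using assms(1,2) by (metis Suc_le_D One_nat_def)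
  then have "r * s + 1 - (r + s - 1) \<le> j"
    using assms(3) by (simp add: algebra_simps)
  moreover have "degree (hoggatt_poly r s) < r * s + 1"
    using degree_hoggatt_poly by (simp add: less_Suc_eq_le)
  ultimately show ?thesis
    unfolding narayana_def narayana_series_eq
    using assms(1,2) poly_hoggatt_poly_neg_eq_0
    by (intro fps_nth_one_minus_X_power_mult_poly_value_fps[where t = "r + s - 1"]) auto
qed

theorem theorem2:
  fixes r m :: nat
  assumes "r \<ge> 1" and "m \<ge> r"
  shows "(1 - fps_X) ^ (r * (m - r + 1) + 1) * Abs_fps (\<lambda>k. dk k m r)
           = fps_const ((-1) ^ (r choose 2)) * fps_X ^ (m - r + 1)
             * Abs_fps (\<lambda>j. narayana r (m - r + 1) j)
         \<and> (\<forall>j > (r - 1) * (m - r). narayana r (m - r + 1) j = 0)"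
proof
  define s where "s = m - r + 1"
  have "Abs_fps (\<lambda>k. dk k m r) = fps_const ((-1) ^ (r choose 2)) * Abs_fps (\<lambda>k. hoggatt r (int k) (int s))"
    using assms by (intro fps_ext) (simp add: dk_eq_hoggatt s_def)
  also have "\<dots> = fps_const ((-1) ^ (r choose 2)) * fps_X ^ s * Abs_fps (\<lambda>k. hoggatt r (int k + int s) (int s))"
    by (simp only: hoggatt_series_shift mult.assoc)
  finally have "(1 - fps_X) ^ (r * s + 1) * Abs_fps (\<lambda>k. dk k m r)
      = fps_const ((-1) ^ (r choose 2)) * fps_X ^ s * narayana_series r s"
    unfolding narayana_series_def by (simp only: mult.left_commute)
  moreover have "narayana_series r s = Abs_fps (narayana r s)"
    by (rule fps_ext) (simp add: narayana_def)
  ultimately show "(1 - fps_X) ^ (r * (m - r + 1) + 1) * Abs_fps (\<lambda>k. dk k m r)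
      = fps_const ((-1) ^ (r choose 2)) * fps_X ^ (m - r + 1) * Abs_fps (\<lambda>j. narayana r (m - r + 1) j)"
    by (simp add: s_def)
next
  show "\<forall>j > (r - 1) * (m - r). narayana r (m - r + 1) j = 0"
    using assms by (auto intro: narayana_eq_0)
qed

end
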